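(* Let $n$ be a positive integer. Then $\mathcal{L}_n \subseteq \mathcal{M}_n$. Moreover, every $\alpha \in \mathcal{L}_n$ can be realized as $\alpha = \mu_n(\xi,\xi')$ for some reals $\xi \neq \xi'$ for which the supremum defining $\mu_n(\xi,\xi')$ is attained at some $(s,t) \in \mathbb{Z}^2\setminus\{0\}$.
   Context: For an irrational real $\xi$ and positive integer $n$, $\lambda_n(\xi) = \limsup_{s/t \to \xi} \dfrac{\gcd(t,n)}{t^2 \left| \frac{s}{t} - \xi\right|}$ (limsup over rationals $s/t$, $t>0$, tending to $\xi$), and $\mathcal{L}_n = \{\lambda_n(\xi)\in\mathbb{R} : \xi\in\mathbb{R}\setminus\mathbb{Q}\}$. For reals $\xi\ne\xi'$, $\mu_n(\xi,\xi') = \sup_{(s,t)\in\mathbb{Z}^2\setminus\{0\}} \dfrac{\gcd(t,n)\,|\xi-\xi'|}{|s-t\xi|\,|s-t\xi'|}$ (with $\gcd(0,n)=n$), and $\mathcal{M}_n$ is the set of finite values of $\mu_n(\xi,\xi')$ over pairs of reals $\xi\neq\xi'$. *)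

theory Defs
  imports "HOL-Analysis.Analysis"
begin

definition lam_term :: "nat \<Rightarrow> real \<Rightarrow> int \<Rightarrow> int \<Rightarrow> ereal" where
  "lam_term n \<xi> s t =
     (if real_of_int s / real_of_int t = \<xi> then \<infinity>
      else ereal (real_of_int (gcd t (int n)) /
                  ((real_of_int t)^2 * \<bar>real_of_int s / real_of_int t - \<xi>\<bar>)))"

text \<open>lambda_n(xi) = limsup of lam_term over pairs (s,t), t > 0, with s/t tending to xi
  (s/t \<noteq> xi), written out as inf over eps of sup over the punctured eps-neighbourhood.\<close>
definition lambda_n :: "nat \<Rightarrow> real \<Rightarrow> ereal" where
  "lambda_n n \<xi> =
     (INF \<epsilon>\<in>{0<..}. SUP p\<in>{(s,t). t > 0 \<and>
                     0 < \<bar>real_of_int s / real_of_int t - \<xi>\<bar> \<and>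
                     \<bar>real_of_int s / real_of_int t - \<xi>\<bar> < \<epsilon>}.
                lam_term n \<xi> (fst p) (snd p))"

definition L_n :: "nat \<Rightarrow> real set" where
  "L_n n = {\<alpha>. \<exists>\<xi>. \<xi> \<notin> \<rat> \<and> lambda_n n \<xi> = ereal \<alpha>}"

text \<open>gcd(t,n)|xi - xi'| / (|s - t xi| |s - t xi'|); a zero denominator gives infinity.
  Note gcd 0 n = n in Isabelle, matching the convention gcd(0,n) = n.\<close>
definition mu_term :: "nat \<Rightarrow> real \<Rightarrow> real \<Rightarrow> int \<Rightarrow> int \<Rightarrow> ereal" where
  "mu_term n \<xi> \<xi>' s t =
     (let d = \<bar>real_of_int s - real_of_int t * \<xi>\<bar> * \<bar>real_of_int s - real_of_int t * \<xi>'\<bar>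
      in if d = 0 then \<infinity>
         else ereal (real_of_int (gcd t (int n)) * \<bar>\<xi> - \<xi>'\<bar> / d))"

definition mu_n :: "nat \<Rightarrow> real \<Rightarrow> real \<Rightarrow> ereal" where
  "mu_n n \<xi> \<xi>' = (SUP p\<in>{p::int\<times>int. p \<noteq> (0,0)}. mu_term n \<xi> \<xi>' (fst p) (snd p))"

definition M_n :: "nat \<Rightarrow> real set" where
  "M_n n = {\<alpha>. \<exists>\<xi> \<xi>'. \<xi> \<noteq> \<xi>' \<and> mu_n n \<xi> \<xi>' = ereal \<alpha>}"

end

theory Submission
  imports Defs "HOL-Analysis.Kronecker_Approximation_Theorem"
begin

(*
  Let xi be irrational with lambda_n(xi) = alpha. By Dirichlet alpha >= 1, so there are coprime
  X_k/Y_k with Y_k -> oo, |X_k - Y_k xi| = O(1/Y_k) and approximation qualities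
  gcd(Y_k, n) / (Y_k |X_k - Y_k xi|) tending to alpha.
  Write (X_k, Y_k) = (u, g) M with g = gcd(Y_k, n), 0 <= u < g and M = [a b; c d] unimodular with
  n | b. The Moebius map z -> (d z - c)/(a - b z) sends xi and oo to eta and eta', and the
  mu_n-quotient of (eta, eta') at (s, t) is the quality of (s a + t c)/(s b + t d) for xi; n | b is
  what makes gcd(s b + t d, n) = gcd(t, n). Taking n Y_k <= b <= 3 n Y_k and
  |a - b xi| >= |X_k - Y_k xi| / 2 keeps eta, eta' bounded and apart, so along a subsequence (u, g)
  is constant and (eta, eta') converges to two distinct reals. For each (s, t) <> 0 the
  corresponding fractions approximate xi ever better, so the limiting mu_n-quotient is at most
  limsup = alpha, while at (u, g) it is the limit alpha of the qualities of X_k/Y_k: the supremum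
  mu_n = alpha is attained.
*)

definition lam_quot :: "nat \<Rightarrow> real \<Rightarrow> int \<Rightarrow> int \<Rightarrow> real" where
  "lam_quot n \<xi> x y =
     real_of_int (gcd y (int n)) / (\<bar>real_of_int y\<bar> * \<bar>real_of_int x - real_of_int y * \<xi>\<bar>)"

definition mu_quot :: "nat \<Rightarrow> real \<Rightarrow> real \<Rightarrow> int \<Rightarrow> int \<Rightarrow> real" where
  "mu_quot n \<eta> \<eta>' s t = real_of_int (gcd t (int n)) * \<bar>\<eta> - \<eta>'\<bar> /
     (\<bar>real_of_int s - real_of_int t * \<eta>\<bar> * \<bar>real_of_int s - real_of_int t * \<eta>'\<bar>)"

definition approx_pairs :: "real \<Rightarrow> real \<Rightarrow> (int \<times> int) set" where
  "approx_pairs \<xi> \<epsilon> = {(s, t). t > 0 \<and> 0 < \<bar>real_of_int s / real_of_int t - \<xi>\<bar> \<and>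
                               \<bar>real_of_int s / real_of_int t - \<xi>\<bar> < \<epsilon>}"

lemma lambda_n_eq_INF_SUP:
  "lambda_n n \<xi> = (INF \<epsilon>\<in>{0<..}. SUP p\<in>approx_pairs \<xi> \<epsilon>. lam_term n \<xi> (fst p) (snd p))"
  unfolding lambda_n_def approx_pairs_def ..

lemma abs_divide_minus_eq:
  fixes x y \<xi> :: real
  assumes "y > 0"
  shows "\<bar>x / y - \<xi>\<bar> = \<bar>x - y * \<xi>\<bar> / y"
proof -
  have "x / y - \<xi> = (x - y * \<xi>) / y" using assms by (simp add: field_simps)
  then show ?thesis using assms by simp
qed

lemma abs_divide_minus_le:
  fixes x y :: int
  assumes "y > 0"
  shows "\<bar>real_of_int x / real_of_int y - \<xi>\<bar> \<le> \<bar>real_of_int x - real_of_int y * \<xi>\<bar>"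
proof -
  have "\<bar>real_of_int x - real_of_int y * \<xi>\<bar> \<le> \<bar>real_of_int x - real_of_int y * \<xi>\<bar> * real_of_int y"
    using assms by (simp add: mult_le_cancel_left1)
  then show ?thesis using assms by (simp add: abs_divide_minus_eq divide_le_eq)
qed

lemma irrational_linear_form_nonzero:
  assumes "\<xi> \<notin> \<rat>" "y \<noteq> 0"
  shows "real_of_int x - real_of_int y * \<xi> \<noteq> 0"
proof
  assume "real_of_int x - real_of_int y * \<xi> = 0"
  then have "\<xi> = real_of_int x / real_of_int y" using assms(2) by (simp add: field_simps)
  with assms(1) show False by simp
qed

lemma lam_term_eq_lam_quot:
  assumes "\<xi> \<notin> \<rat>" "y > 0"
  shows "lam_term n \<xi> x y = ereal (lam_quot n \<xi> x y)"
proof -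
  have "real_of_int x / real_of_int y \<noteq> \<xi>"
    using irrational_linear_form_nonzero[OF assms(1), of y x] assms(2) by (auto simp: field_simps)
  moreover have "(real_of_int y)\<^sup>2 * \<bar>real_of_int x / real_of_int y - \<xi>\<bar> =
                 \<bar>real_of_int y\<bar> * \<bar>real_of_int x - real_of_int y * \<xi>\<bar>"
    using assms(2) by (simp add: abs_divide_minus_eq power2_eq_square)
  ultimately show ?thesis unfolding lam_term_def lam_quot_def by simp
qed

lemma lam_quot_uminus: "lam_quot n \<xi> (- x) (- y) = lam_quot n \<xi> x y"
  unfolding lam_quot_def by (simp add: abs_minus_commute algebra_simps)

lemma lam_quot_pos:
  assumes "\<xi> \<notin> \<rat>" "n > 0" "y \<noteq> 0"
  shows "lam_quot n \<xi> x y > 0"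
  using irrational_linear_form_nonzero[OF assms(1,3)] assms(2,3) unfolding lam_quot_def by simp

lemma abs_linear_form_less_of_lam_quot:
  assumes "\<xi> \<notin> \<rat>" "n > 0" "y > 0" "c > 0" "c < lam_quot n \<xi> x y"
  shows "\<bar>real_of_int x - real_of_int y * \<xi>\<bar> < real n / (c * real_of_int y)"
proof -
  define D where "D = real_of_int y * \<bar>real_of_int x - real_of_int y * \<xi>\<bar>"
  have "D > 0" unfolding D_def using irrational_linear_form_nonzero[OF assms(1)] assms(3) by simp
  have "c < real_of_int (gcd y (int n)) / D" using assms(3,5) unfolding lam_quot_def D_def by simp
  then have "c * D < real_of_int (gcd y (int n))" using \<open>D > 0\<close> by (simp add: field_simps)
  also have "\<dots> \<le> real n"
    using gcd_le2_int[of "int n" y] assms(2) by (metis of_int_le_iff of_int_of_nat_eq of_nat_0_less_iff)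
  finally show ?thesis using assms(3,4) unfolding D_def by (simp add: field_simps mult.assoc)
qed

lemma mu_term_eq_mu_quot:
  assumes "\<bar>real_of_int s - real_of_int t * \<eta>\<bar> * \<bar>real_of_int s - real_of_int t * \<eta>'\<bar> \<noteq> 0"
  shows "mu_term n \<eta> \<eta>' s t = ereal (mu_quot n \<eta> \<eta>' s t)"
  using assms unfolding mu_term_def mu_quot_def Let_def by simp

lemma lambda_n_upper:
  assumes irr: "\<xi> \<notin> \<rat>" and la: "lambda_n n \<xi> = ereal \<alpha>" and "\<delta> > 0"
  obtains \<epsilon> where "\<epsilon> > 0"
    and "\<And>x y. (x, y) \<noteq> (0, 0) \<Longrightarrow> \<bar>real_of_int x - real_of_int y * \<xi>\<bar> < \<epsilon> \<Longrightarrow>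
           y \<noteq> 0 \<and> lam_quot n \<xi> x y < \<alpha> + \<delta>"
proof -
  have "(INF \<epsilon>\<in>{0<..}. SUP p\<in>approx_pairs \<xi> \<epsilon>. lam_term n \<xi> (fst p) (snd p)) < ereal (\<alpha> + \<delta>)"
    using la \<open>\<delta> > 0\<close> by (simp add: lambda_n_eq_INF_SUP[symmetric])
  then obtain \<epsilon> where "\<epsilon> > 0"
    and \<epsilon>: "(SUP p\<in>approx_pairs \<xi> \<epsilon>. lam_term n \<xi> (fst p) (snd p)) < ereal (\<alpha> + \<delta>)"
    by (auto simp: INF_less_iff)
  have below: "lam_quot n \<xi> x y < \<alpha> + \<delta>"
    if "y > 0" and "\<bar>real_of_int x - real_of_int y * \<xi>\<bar> < \<epsilon>" for x y
  proof -
    have "0 < \<bar>real_of_int x / real_of_int y - \<xi>\<bar>"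
      using irrational_linear_form_nonzero[OF irr, of y x] \<open>y > 0\<close> by (simp add: abs_divide_minus_eq)
    then have "(x, y) \<in> approx_pairs \<xi> \<epsilon>"
      using that abs_divide_minus_le[OF \<open>y > 0\<close>, of x \<xi>] unfolding approx_pairs_def by auto
    then have "lam_term n \<xi> x y \<le> (SUP p\<in>approx_pairs \<xi> \<epsilon>. lam_term n \<xi> (fst p) (snd p))"
      using SUP_upper[of "(x, y)" _ "\<lambda>p. lam_term n \<xi> (fst p) (snd p)"] by simp
    then have "lam_term n \<xi> x y < ereal (\<alpha> + \<delta>)" using \<epsilon> by (rule order_le_less_trans)
    then show ?thesis using lam_term_eq_lam_quot[OF irr \<open>y > 0\<close>] by simp
  qed
  show thesis
  proof (rule that[of "min \<epsilon> 1"])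
    show "min \<epsilon> 1 > 0" using \<open>\<epsilon> > 0\<close> by simp
    fix x y :: int
    assume nz: "(x, y) \<noteq> (0, 0)" and small: "\<bar>real_of_int x - real_of_int y * \<xi>\<bar> < min \<epsilon> 1"
    have "y \<noteq> 0"
    proof
      assume "y = 0"
      with nz small show False by (simp add: abs_less_iff)
    qed
    moreover have "lam_quot n \<xi> x y < \<alpha> + \<delta>"
    proof (cases "y > 0")
      case True
      then show ?thesis using below small by simp
    next
      case False
      then have "- y > 0" using \<open>y \<noteq> 0\<close> by simp
      moreover have "\<bar>real_of_int (- x) - real_of_int (- y) * \<xi>\<bar> < \<epsilon>" using small by (simp add: abs_minus_commute)
      ultimately show ?thesis using below[of "- y" "- x"] by (simp add: lam_quot_uminus)
    qed
    ultimately show "y \<noteq> 0 \<and> lam_quot n \<xi> x y < \<alpha> + \<delta>" by blast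
  qed
qed

lemma lambda_n_lower:
  assumes irr: "\<xi> \<notin> \<rat>" and la: "lambda_n n \<xi> = ereal \<alpha>" and "\<delta> > 0" "\<epsilon> > 0"
  obtains x y where "y > 0" "\<bar>real_of_int x / real_of_int y - \<xi>\<bar> < \<epsilon>" "\<alpha> - \<delta> < lam_quot n \<xi> x y"
proof -
  have "ereal (\<alpha> - \<delta>) < ereal \<alpha>" using \<open>\<delta> > 0\<close> by simp
  also have "ereal \<alpha> \<le> (SUP p\<in>approx_pairs \<xi> \<epsilon>. lam_term n \<xi> (fst p) (snd p))"
    using INF_lower[of \<epsilon> "{0<..}" "\<lambda>\<epsilon>. SUP p\<in>approx_pairs \<xi> \<epsilon>. lam_term n \<xi> (fst p) (snd p)"]
      la \<open>\<epsilon> > 0\<close> by (simp add: lambda_n_eq_INF_SUP)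
  finally obtain p where p: "p \<in> approx_pairs \<xi> \<epsilon>" "ereal (\<alpha> - \<delta>) < lam_term n \<xi> (fst p) (snd p)"
    unfolding less_SUP_iff by blast
  obtain x y where "p = (x, y)" by fastforce
  with p have "y > 0" "\<bar>real_of_int x / real_of_int y - \<xi>\<bar> < \<epsilon>" and "\<alpha> - \<delta> < lam_quot n \<xi> x y"
    using lam_term_eq_lam_quot[OF irr] by (auto simp: approx_pairs_def)
  then show thesis by (rule that)
qed

lemma lambda_n_ge_one:
  assumes irr: "\<xi> \<notin> \<rat>" and la: "lambda_n n \<xi> = ereal \<alpha>" and "n > 0"
  shows "\<alpha> \<ge> 1"
proof (rule ccontr)
  assume "\<not> \<alpha> \<ge> 1"
  then have "1 - \<alpha> > 0" by simp
  then obtain \<epsilon> where "\<epsilon> > 0" and below: "\<And>x y. (x, y) \<noteq> (0, 0) \<Longrightarrow>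
      \<bar>real_of_int x - real_of_int y * \<xi>\<bar> < \<epsilon> \<Longrightarrow> y \<noteq> 0 \<and> lam_quot n \<xi> x y < \<alpha> + (1 - \<alpha>)"
    using lambda_n_upper[OF irr la] by blast
  obtain N :: nat where "1 / \<epsilon> < real N" using reals_Archimedean2 by blast
  moreover have "0 < 1 / \<epsilon>" using \<open>\<epsilon> > 0\<close> by simp
  ultimately have "N > 0" by linarith
  have "1 / real N < \<epsilon>" using \<open>1 / \<epsilon> < real N\<close> \<open>\<epsilon> > 0\<close> \<open>N > 0\<close> by (simp add: field_simps)
  from \<open>N > 0\<close> obtain h k where "0 < k" "k \<le> int N" and hk: "\<bar>real_of_int k * \<xi> - real_of_int h\<bar> < 1 / N"
    by (rule Dirichlet_approx)
  define L where "L = \<bar>real_of_int h - real_of_int k * \<xi>\<bar>"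
  have "L < 1 / N" using hk unfolding L_def by (simp add: abs_minus_commute)
  have "L > 0" unfolding L_def using irrational_linear_form_nonzero[OF irr] \<open>0 < k\<close> by simp
  have "real_of_int k * L < real N * (1 / N)"
    using \<open>L < 1 / N\<close> \<open>k \<le> int N\<close> \<open>0 < k\<close> \<open>L > 0\<close> by (intro mult_le_less_imp_less) auto
  then have "real_of_int k * L < 1" using \<open>N > 0\<close> by simp
  also have "1 \<le> real_of_int (gcd k (int n))" using \<open>n > 0\<close> by (simp add: int_one_le_iff_zero_less)
  finally have "1 < real_of_int (gcd k (int n)) / (real_of_int k * L)"
    using \<open>0 < k\<close> \<open>L > 0\<close> by (simp add: less_divide_eq_1_pos)
  also have "\<dots> = lam_quot n \<xi> h k" unfolding lam_quot_def L_def using \<open>0 < k\<close> by simp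
  finally have "1 < lam_quot n \<xi> h k" .
  have "L < \<epsilon>" using \<open>L < 1 / N\<close> \<open>1 / real N < \<epsilon>\<close> by simp
  then have "lam_quot n \<xi> h k < 1" using below[of h k] \<open>0 < k\<close> unfolding L_def by simp
  with \<open>1 < lam_quot n \<xi> h k\<close> show False by simp
qed

lemma eventually_lam_quot_below:
  assumes n: "n > 0" and irr: "\<xi> \<notin> \<rat>" and la: "lambda_n n \<xi> = ereal \<alpha>" and "\<delta> > 0"
    and pairs: "\<And>k. \<exists>P Q. (P, Q) \<noteq> (0, 0) \<and> v k = lam_quot n \<xi> P Q \<and>
                         \<bar>real_of_int P - real_of_int Q * \<xi>\<bar> \<le> w k"
    and "w \<longlonglongrightarrow> 0"
  shows "eventually (\<lambda>k. 0 < v k \<and> v k < \<alpha> + \<delta>) sequentially"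
proof -
  obtain \<epsilon> where "\<epsilon> > 0" and below: "\<And>x y. (x, y) \<noteq> (0, 0) \<Longrightarrow>
      \<bar>real_of_int x - real_of_int y * \<xi>\<bar> < \<epsilon> \<Longrightarrow> y \<noteq> 0 \<and> lam_quot n \<xi> x y < \<alpha> + \<delta>"
    using lambda_n_upper[OF irr la \<open>\<delta> > 0\<close>] by blast
  from \<open>w \<longlonglongrightarrow> 0\<close> \<open>\<epsilon> > 0\<close> have "eventually (\<lambda>k. w k < \<epsilon>) sequentially" by (rule order_tendstoD)
  then show ?thesis
  proof (rule eventually_mono)
    fix k assume "w k < \<epsilon>"
    from pairs[of k] obtain P Q where "(P, Q) \<noteq> (0, 0)" "v k = lam_quot n \<xi> P Q"
      and "\<bar>real_of_int P - real_of_int Q * \<xi>\<bar> \<le> w k" by blast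
    with \<open>w k < \<epsilon>\<close> have "\<bar>real_of_int P - real_of_int Q * \<xi>\<bar> < \<epsilon>" by linarith
    with below[OF \<open>(P, Q) \<noteq> (0, 0)\<close>] have "Q \<noteq> 0" and "lam_quot n \<xi> P Q < \<alpha> + \<delta>" by blast+
    with lam_quot_pos[OF irr n] show "0 < v k \<and> v k < \<alpha> + \<delta>" unfolding \<open>v k = lam_quot n \<xi> P Q\<close> by blast
  qed
qed

lemma min_frac_le_abs_diff_int: "min (frac z) (1 - frac z) \<le> \<bar>real_of_int x - z\<bar>"
proof (cases "x \<le> \<lfloor>z\<rfloor>")
  case True
  then have "real_of_int x \<le> real_of_int \<lfloor>z\<rfloor>" by simp
  then show ?thesis unfolding frac_def by linarith
next
  case False
  then have "real_of_int x \<ge> real_of_int \<lfloor>z\<rfloor> + 1" by simp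
  then show ?thesis unfolding frac_def by linarith
qed

lemma irrational_separated_from_small_denominators:
  assumes "\<xi> \<notin> \<rat>"
  obtains \<epsilon> where "\<epsilon> > 0"
    and "\<And>x y. 0 < y \<Longrightarrow> y \<le> int k \<Longrightarrow> \<epsilon> \<le> \<bar>real_of_int x / real_of_int y - \<xi>\<bar>"
proof -
  define \<delta> where "\<delta> y = min (frac (real_of_int y * \<xi>)) (1 - frac (real_of_int y * \<xi>)) / real_of_int y"
    for y :: int
  have \<delta>_pos: "\<delta> y > 0" if "y > 0" for y
  proof -
    have "frac (real_of_int y * \<xi>) \<noteq> 0"
    proof
      assume "frac (real_of_int y * \<xi>) = 0"
      then obtain q where "real_of_int y * \<xi> = of_int q" by (auto elim: Ints_cases)
      then show False using irrational_linear_form_nonzero[OF assms, of y q] that by simp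
    qed
    then have "0 < frac (real_of_int y * \<xi>)" using frac_ge_0 by (simp add: less_le)
    then have "0 < min (frac (real_of_int y * \<xi>)) (1 - frac (real_of_int y * \<xi>))"
      using frac_lt_1 by simp
    then show ?thesis unfolding \<delta>_def using that by simp
  qed
  have \<delta>_le: "\<delta> y \<le> \<bar>real_of_int x / real_of_int y - \<xi>\<bar>" if "y > 0" for x y
    using min_frac_le_abs_diff_int[of "real_of_int y * \<xi>" x] that
    unfolding \<delta>_def by (simp add: abs_divide_minus_eq divide_right_mono)
  define \<epsilon> where "\<epsilon> = Min (insert 1 (\<delta> ` {1..int k}))"
  show thesis
  proof (rule that)
    show "\<epsilon> > 0" unfolding \<epsilon>_def using \<delta>_pos by (simp add: Min_gr_iff)
    fix x y :: int
    assume "0 < y" "y \<le> int k"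
    then have "\<epsilon> \<le> \<delta> y" unfolding \<epsilon>_def by (intro Min_le) auto
    also have "\<dots> \<le> \<bar>real_of_int x / real_of_int y - \<xi>\<bar>" using \<delta>_le \<open>0 < y\<close> .
    finally show "\<epsilon> \<le> \<bar>real_of_int x / real_of_int y - \<xi>\<bar>" .
  qed
qed

lemma gcd_mult_left_le:
  fixes m y :: int
  assumes "m > 0" "n > 0"
  shows "gcd (m * y) n \<le> m * gcd y n"
proof (rule zdvd_imp_le)
  have "gcd (m * y) n dvd gcd (m * y) (m * n)" by (simp add: gcd_greatest)
  then show "gcd (m * y) n dvd m * gcd y n" using \<open>m > 0\<close> by (simp add: gcd_mult_left)
  show "0 < m * gcd y n" using assms by simp
qed

lemma exists_coprime_lam_quot_ge:
  assumes irr: "\<xi> \<notin> \<rat>" and "n > 0" "y > 0"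
  obtains x' y' where "coprime x' y'" "y' > 0"
    and "real_of_int x' / real_of_int y' = real_of_int x / real_of_int y"
    and "lam_quot n \<xi> x y \<le> lam_quot n \<xi> x' y'"
proof -
  define m where "m = gcd x y"
  define x' where "x' = x div m"
  define y' where "y' = y div m"
  have "m > 0" unfolding m_def using \<open>y > 0\<close> by simp
  have x: "x = m * x'" and y: "y = m * y'" unfolding x'_def y'_def m_def by simp_all
  have "coprime x' y'" unfolding x'_def y'_def m_def by (rule div_gcd_coprime) (use \<open>y > 0\<close> in auto)
  have "y' > 0" using \<open>y > 0\<close> \<open>m > 0\<close> y by (simp add: zero_less_mult_iff)
  define D where "D = \<bar>real_of_int y'\<bar> * \<bar>real_of_int x' - real_of_int y' * \<xi>\<bar>"
  have "D > 0" unfolding D_def using irrational_linear_form_nonzero[OF irr] \<open>y' > 0\<close> by simp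
  have "real_of_int x - real_of_int y * \<xi> = real_of_int m * (real_of_int x' - real_of_int y' * \<xi>)"
    using x y by (simp add: algebra_simps)
  then have "lam_quot n \<xi> x y = real_of_int (gcd (m * y') (int n)) / ((real_of_int m)\<^sup>2 * D)"
    unfolding lam_quot_def D_def using \<open>m > 0\<close> by (simp add: abs_mult power2_eq_square y)
  also have "\<dots> \<le> real_of_int (m * gcd y' (int n)) / ((real_of_int m)\<^sup>2 * D)"
  proof (rule divide_right_mono)
    have "gcd (m * y') (int n) \<le> m * gcd y' (int n)" using gcd_mult_left_le \<open>m > 0\<close> \<open>n > 0\<close> by simp
    then show "real_of_int (gcd (m * y') (int n)) \<le> real_of_int (m * gcd y' (int n))"
      by (simp only: of_int_le_iff)
  qed (use \<open>D > 0\<close> in simp)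
  also have "\<dots> = real_of_int (gcd y' (int n)) / (real_of_int m * D)"
    using \<open>m > 0\<close> by (simp add: power2_eq_square)
  also have "\<dots> \<le> real_of_int (gcd y' (int n)) / D"
    using \<open>m > 0\<close> \<open>D > 0\<close> by (intro divide_left_mono) (simp_all add: mult_le_cancel_right1)
  also have "\<dots> = lam_quot n \<xi> x' y'" unfolding lam_quot_def D_def ..
  finally show thesis
    using that \<open>coprime x' y'\<close> \<open>y' > 0\<close> \<open>m > 0\<close> x y by simp
qed

lemma exists_coprime_approximation_large_denominator:
  assumes irr: "\<xi> \<notin> \<rat>" and la: "lambda_n n \<xi> = ereal \<alpha>" and "n > 0" "\<delta> > 0"
  obtains x y where "coprime x y" "int k < y" "\<alpha> - \<delta> < lam_quot n \<xi> x y"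
proof -
  obtain \<epsilon> where "\<epsilon> > 0"
    and sep: "\<And>x y. 0 < y \<Longrightarrow> y \<le> int k \<Longrightarrow> \<epsilon> \<le> \<bar>real_of_int x / real_of_int y - \<xi>\<bar>"
    using irrational_separated_from_small_denominators[OF irr] by blast
  obtain x0 y0 where "y0 > 0" and close: "\<bar>real_of_int x0 / real_of_int y0 - \<xi>\<bar> < \<epsilon>"
    and good: "\<alpha> - \<delta> < lam_quot n \<xi> x0 y0"
    using lambda_n_lower[OF irr la \<open>\<delta> > 0\<close> \<open>\<epsilon> > 0\<close>] by blast
  obtain x y where "coprime x y" "y > 0" and same: "real_of_int x / real_of_int y = real_of_int x0 / real_of_int y0"
    and "lam_quot n \<xi> x0 y0 \<le> lam_quot n \<xi> x y"
    using exists_coprime_lam_quot_ge[OF irr \<open>n > 0\<close> \<open>y0 > 0\<close>] by blast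
  moreover have "int k < y"
  proof (rule ccontr)
    assume "\<not> int k < y"
    then have "\<epsilon> \<le> \<bar>real_of_int x / real_of_int y - \<xi>\<bar>" using sep \<open>y > 0\<close> by simp
    with close same show False by simp
  qed
  ultimately show thesis using good by (meson that order_less_le_trans)
qed

lemma lam_quot_tendsto:
  assumes n: "n > 0" and irr: "\<xi> \<notin> \<rat>" and la: "lambda_n n \<xi> = ereal \<alpha>"
    and nonzero: "\<And>k. Y k \<noteq> 0"
    and lower: "\<And>k. \<alpha> - d k < lam_quot n \<xi> (X k) (Y k)" and "d \<longlonglongrightarrow> 0"
    and close: "\<And>k. \<bar>real_of_int (X k) - real_of_int (Y k) * \<xi>\<bar> \<le> w k" and "w \<longlonglongrightarrow> 0"
  shows "(\<lambda>k. lam_quot n \<xi> (X k) (Y k)) \<longlonglongrightarrow> \<alpha>"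
proof (rule order_tendstoI)
  fix a assume "a < \<alpha>"
  then have "0 < \<alpha> - a" by simp
  with \<open>d \<longlonglongrightarrow> 0\<close> have "eventually (\<lambda>k. d k < \<alpha> - a) sequentially" by (rule order_tendstoD)
  then show "eventually (\<lambda>k. a < lam_quot n \<xi> (X k) (Y k)) sequentially"
  proof (rule eventually_mono)
    fix k assume "d k < \<alpha> - a"
    with lower[of k] show "a < lam_quot n \<xi> (X k) (Y k)" by linarith
  qed
next
  fix a assume "\<alpha> < a"
  then have "a - \<alpha> > 0" by simp
  have "eventually (\<lambda>k. 0 < lam_quot n \<xi> (X k) (Y k) \<and> lam_quot n \<xi> (X k) (Y k) < \<alpha> + (a - \<alpha>))
          sequentially"
  proof (rule eventually_lam_quot_below[OF n irr la \<open>a - \<alpha> > 0\<close> _ \<open>w \<longlonglongrightarrow> 0\<close>])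
    show "\<exists>P Q. (P, Q) \<noteq> (0, 0) \<and> lam_quot n \<xi> (X k) (Y k) = lam_quot n \<xi> P Q \<and>
        \<bar>real_of_int P - real_of_int Q * \<xi>\<bar> \<le> w k" for k
      using close[of k] nonzero[of k] by blast
  qed
  then show "eventually (\<lambda>k. lam_quot n \<xi> (X k) (Y k) < a) sequentially"
    by (rule eventually_mono) simp
qed

lemma exists_approximation_sequence:
  assumes n: "n > 0" and irr: "\<xi> \<notin> \<rat>" and la: "lambda_n n \<xi> = ereal \<alpha>"
  obtains X Y :: "nat \<Rightarrow> int"
  where "\<And>k. coprime (X k) (Y k)" and "\<And>k. Y k > 0"
    and "filterlim (\<lambda>k. real_of_int (Y k)) at_top sequentially"
    and "\<And>k. \<bar>real_of_int (X k) - real_of_int (Y k) * \<xi>\<bar> \<le> 2 * real n / real_of_int (Y k)"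
    and "(\<lambda>k. lam_quot n \<xi> (X k) (Y k)) \<longlonglongrightarrow> \<alpha>"
proof -
  have "\<exists>x y. coprime x y \<and> int k < y \<and> \<alpha> - 1 / (real k + 2) < lam_quot n \<xi> x y" for k
  proof -
    have "1 / (real k + 2) > 0" by simp
    from exists_coprime_approximation_large_denominator[OF irr la n this] show ?thesis by blast
  qed
  then obtain X Y where cop: "\<And>k. coprime (X k) (Y k)" and large: "\<And>k. int k < Y k"
    and lower: "\<And>k. \<alpha> - 1 / (real k + 2) < lam_quot n \<xi> (X k) (Y k)"
    by metis
  have Y_pos: "Y k > 0" for k using large[of k] by linarith
  have Y_top: "filterlim (\<lambda>k. real_of_int (Y k)) at_top sequentially"
    by (rule filterlim_at_top_mono[OF filterlim_real_sequentially], rule always_eventually)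
      (metis large less_imp_le of_int_le_iff of_int_of_nat_eq)
  have bound: "\<bar>real_of_int (X k) - real_of_int (Y k) * \<xi>\<bar> \<le> 2 * real n / real_of_int (Y k)" for k
  proof -
    have "1 / (real k + 2) \<le> 1 / 2" by (simp add: field_simps)
    then have "1 / 2 < lam_quot n \<xi> (X k) (Y k)"
      using lower[of k] lambda_n_ge_one[OF irr la n] by linarith
    from abs_linear_form_less_of_lam_quot[OF irr n Y_pos _ this] show ?thesis
      by (simp add: field_simps)
  qed
  have d_lim: "(\<lambda>k. 1 / (real k + 2)) \<longlonglongrightarrow> 0"
    using LIMSEQ_ignore_initial_segment[OF lim_1_over_n[where 'a = real], of 2] by (simp add: add.commute)
  have w_lim: "(\<lambda>k. 2 * real n / real_of_int (Y k)) \<longlonglongrightarrow> 0"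
    by (rule tendsto_divide_0[OF tendsto_const filterlim_at_top_imp_at_infinity[OF Y_top]])
  have nonzero: "Y k \<noteq> 0" for k using Y_pos[of k] by simp
  from cop Y_pos Y_top bound lam_quot_tendsto[OF n irr la nonzero lower d_lim bound w_lim]
  show thesis by (rule that)
qed

lemma coprime_of_bezout:
  fixes a b s t :: "'a :: algebraic_semidom"
  assumes "s * a + t * b = 1"
  shows "coprime a b"
proof (rule coprimeI)
  fix c assume "c dvd a" "c dvd b"
  then have "c dvd s * a + t * b" by simp
  then show "is_unit c" using assms by simp
qed

lemma exists_coprime_add_mult:
  fixes a m g :: int
  assumes cop: "coprime a m" and "g \<noteq> 0"
  obtains k where "coprime (a + k * m) g"
proof -
  define P where "P = {p \<in> prime_factors g. \<not> p dvd a}"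
  define k where "k = \<Prod>P"
  have "finite P" unfolding P_def by simp
  have no_common_prime: "\<not> p dvd a + k * m" if "prime p" "p dvd g" for p
  proof (cases "p dvd a")
    case True
    have "\<not> p dvd m"
    proof
      assume "p dvd m"
      then have "is_unit p" using coprime_common_divisor[OF cop True] by blast
      with \<open>prime p\<close> show False by (simp add: not_prime_unit)
    qed
    moreover have "\<not> p dvd k"
    proof
      assume "p dvd k"
      then obtain q where "q \<in> P" "p dvd q" by (auto simp: k_def prime_dvd_prod_iff[OF \<open>finite P\<close> \<open>prime p\<close>])
      then have "prime q" "\<not> q dvd a" unfolding P_def by (simp_all add: in_prime_factors_iff)
      with \<open>p dvd q\<close> \<open>prime p\<close> True show False using primes_dvd_imp_eq by blast
    qed
    ultimately have "\<not> p dvd k * m" by (simp add: prime_dvd_mult_iff[OF \<open>prime p\<close>])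
    with True show ?thesis by (simp add: dvd_add_right_iff)
  next
    case False
    then have "p \<in> P" unfolding P_def using that \<open>g \<noteq> 0\<close> by (simp add: in_prime_factors_iff)
    then have "p dvd k * m" unfolding k_def using \<open>finite P\<close> by (simp add: dvd_prod_eqI)
    with False show ?thesis by (simp add: dvd_add_left_iff)
  qed
  have "coprime (a + k * m) g"
  proof (rule ccontr)
    assume "\<not> coprime (a + k * m) g"
    then have "\<not> is_unit (gcd (a + k * m) g)" using is_unit_gcd by blast
    moreover have "gcd (a + k * m) g \<noteq> 0" using \<open>g \<noteq> 0\<close> by simp
    ultimately obtain p where "prime p" "p dvd gcd (a + k * m) g" using prime_divisor_exists by blast
    then show False using no_common_prime by auto
  qed
  then show thesis by (rule that)
qed

lemma gcd_add_mult_left_int: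
  fixes a q g :: int
  shows "gcd (a + q * g) g = gcd a g"
proof -
  have "gcd g (q * g + a) = gcd g a" by (rule gcd_add_mult)
  then show ?thesis by (simp add: gcd.commute add.commute)
qed

lemma exists_coprime_solution_family:
  fixes X Y n :: int
  assumes "n > 0" "coprime X Y"
  obtains a0 b0 where "n dvd b0" "Y * a0 - X * b0 = gcd Y n"
    and "\<And>K. coprime (a0 + K * n * X) (b0 + K * n * Y)"
proof -
  define g where "g = gcd Y n"
  define y1 where "y1 = Y div g"
  define n1 where "n1 = n div g"
  have "g > 0" unfolding g_def using \<open>n > 0\<close> by simp
  have Y: "Y = g * y1" and n: "n = g * n1" unfolding y1_def n1_def g_def by simp_all
  have "coprime y1 n1" unfolding y1_def n1_def g_def by (rule div_gcd_coprime) (use \<open>n > 0\<close> in auto)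
  moreover have "coprime y1 X" using \<open>coprime X Y\<close> Y by (simp add: coprime_commute)
  ultimately have "coprime y1 (X * n1)" by simp
  then obtain s t where st: "s * y1 + t * (X * n1) = 1"
    using bezout_int[of y1 "X * n1"] by (auto simp: coprime_iff_gcd_eq_1)
  then have "coprime s (X * n1)" by (intro coprime_of_bezout[of y1 s t]) (simp add: ac_simps)
  moreover have "g \<noteq> 0" using \<open>g > 0\<close> by simp
  ultimately obtain k where k: "coprime (s + k * (X * n1)) g" by (rule exists_coprime_add_mult)
  define a0 where "a0 = s + k * (X * n1)"
  define \<beta>0 where "\<beta>0 = k * y1 - t"
  have eq: "y1 * a0 - X * n1 * \<beta>0 = 1" unfolding a0_def \<beta>0_def using st by (simp add: algebra_simps)
  show thesis
  proof (rule that[of "n * \<beta>0" a0])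
    show "n dvd n * \<beta>0" by simp
    have "Y * a0 - X * (n * \<beta>0) = g * (y1 * a0 - X * n1 * \<beta>0)" using Y n by (simp add: algebra_simps)
    then show "Y * a0 - X * (n * \<beta>0) = gcd Y n" using eq g_def by simp
  next
    fix K
    define \<beta> where "\<beta> = \<beta>0 + K * Y"
    have "y1 * (a0 + K * n * X) + (- X) * (n1 * \<beta>) = 1"
      using eq unfolding \<beta>_def by (simp add: Y n algebra_simps)
    then have "coprime (a0 + K * n * X) (n1 * \<beta>)" by (rule coprime_of_bezout)
    moreover have "coprime (a0 + K * n1 * X * g) g"
      using k unfolding a0_def[symmetric] coprime_iff_gcd_eq_1 gcd_add_mult_left_int .
    then have "coprime (a0 + K * n * X) g" by (simp add: n ac_simps)
    ultimately have "coprime (a0 + K * n * X) (g * (n1 * \<beta>))" by simp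
    then show "coprime (a0 + K * n * X) (n * \<beta>0 + K * n * Y)"
      unfolding \<beta>_def by (simp add: n algebra_simps)
  qed
qed

lemma exists_unimodular_completion:
  fixes X Y a b g :: int
  assumes "coprime a b" and eq: "Y * a - X * b = g" and "g > 0"
  obtains u c d where "0 \<le> u" "u < g" "a * d - b * c = 1" "u * a + g * c = X" "u * b + g * d = Y"
proof -
  obtain s t where st: "s * a + t * b = 1"
    using bezout_int[of a b] \<open>coprime a b\<close> by (auto simp: coprime_iff_gcd_eq_1)
  define j where "j = (X * s + Y * t) div g"
  define u where "u = (X * s + Y * t) mod g"
  define c where "c = j * a - t"
  define d where "d = s + j * b"
  have det: "a * d - b * c = 1" unfolding c_def d_def using st by (simp add: algebra_simps)
  have "u = X * d - Y * c"
  proof -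
    have "X * s + Y * t = j * g + u" unfolding j_def u_def by simp
    moreover have "X * d - Y * c = X * s + Y * t - j * (Y * a - X * b)"
      unfolding c_def d_def by (simp add: algebra_simps)
    ultimately show ?thesis using eq by simp
  qed
  then have "u * a + g * c = X * (a * d - b * c)" and "u * b + g * d = Y * (a * d - b * c)"
    unfolding \<open>u = X * d - Y * c\<close> eq[symmetric] by (simp_all add: algebra_simps)
  moreover have "0 \<le> u" "u < g" unfolding u_def using \<open>g > 0\<close> by simp_all
  ultimately show thesis using det by (intro that) simp_all
qed

lemma exists_window_index_with_large_term:
  fixes A :: "int \<Rightarrow> real" and b N :: int
  assumes "N > 0" "m \<ge> 1" and step: "\<And>K. A (K + 1) = A K + m * C"
  obtains K where "\<bar>C\<bar> \<le> 2 * \<bar>A K\<bar>" "N \<le> b + K * N" "b + K * N \<le> 3 * N"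
proof -
  define K0 where "K0 = 1 - b div N"
  have "b + K0 * N = b mod N + N" unfolding K0_def by (simp add: algebra_simps minus_div_mult_eq_mod[symmetric])
  moreover have "0 \<le> b mod N" "b mod N < N" using \<open>N > 0\<close> by simp_all
  ultimately have window: "N \<le> b + K0 * N" "b + (K0 + 1) * N \<le> 3 * N" "N \<le> b + (K0 + 1) * N"
    "b + K0 * N \<le> 3 * N" by (simp_all add: algebra_simps)
  show thesis
  proof (cases "\<bar>C\<bar> \<le> 2 * \<bar>A K0\<bar>")
    case True
    with window show thesis by (intro that[of K0])
  next
    case False
    have "m * \<bar>C\<bar> - \<bar>A K0\<bar> \<le> \<bar>A (K0 + 1)\<bar>"
      using step[of K0] abs_triangle_ineq2[of "m * C" "- A K0"] \<open>m \<ge> 1\<close> by (simp add: abs_mult algebra_simps)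
    moreover have "\<bar>C\<bar> \<le> m * \<bar>C\<bar>" using \<open>m \<ge> 1\<close> by (simp add: mult_le_cancel_right1)
    ultimately have "\<bar>C\<bar> \<le> 2 * \<bar>A (K0 + 1)\<bar>" using False by linarith
    with window show thesis by (intro that[of "K0 + 1"])
  qed
qed

lemma exists_reduction_matrix:
  fixes X Y :: int and n :: nat and \<xi> :: real
  assumes "n > 0" "Y > 0" "coprime X Y"
  obtains u a b c d where "0 \<le> u" "u < gcd Y (int n)" "a * d - b * c = 1"
    and "u * a + gcd Y (int n) * c = X" "u * b + gcd Y (int n) * d = Y" "int n dvd b"
    and "int n * Y \<le> b" "b \<le> 3 * int n * Y"
    and "\<bar>real_of_int X - real_of_int Y * \<xi>\<bar> \<le> 2 * \<bar>real_of_int a - real_of_int b * \<xi>\<bar>"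
proof -
  define g where "g = gcd Y (int n)"
  have "g > 0" unfolding g_def using \<open>n > 0\<close> by simp
  have "int n > 0" using \<open>n > 0\<close> by simp
  from exists_coprime_solution_family[OF this \<open>coprime X Y\<close>]
  obtain a0 b0 where "int n dvd b0" and eq: "Y * a0 - X * b0 = g"
    and cop: "\<And>K. coprime (a0 + K * int n * X) (b0 + K * int n * Y)"
    unfolding g_def by metis
  define A where "A K = real_of_int (a0 + K * int n * X) - real_of_int (b0 + K * int n * Y) * \<xi>" for K
  have "int n * Y > 0" "real n \<ge> 1" using assms by simp_all
  moreover have "A (K + 1) = A K + real n * (real_of_int X - real_of_int Y * \<xi>)" for K
    unfolding A_def by (simp add: algebra_simps)
  ultimately obtain K where far: "\<bar>real_of_int X - real_of_int Y * \<xi>\<bar> \<le> 2 * \<bar>A K\<bar>"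
    and "int n * Y \<le> b0 + K * (int n * Y)" "b0 + K * (int n * Y) \<le> 3 * (int n * Y)"
    by (rule exists_window_index_with_large_term)
  define a where "a = a0 + K * int n * X"
  define b where "b = b0 + K * int n * Y"
  have "Y * a - X * b = g" unfolding a_def b_def using eq by (simp add: algebra_simps)
  then obtain u c d where "0 \<le> u" "u < g" "a * d - b * c = 1" "u * a + g * c = X" "u * b + g * d = Y"
    using exists_unimodular_completion[OF cop[of K, folded a_def b_def] _ \<open>g > 0\<close>] by blast
  moreover have "int n dvd b" unfolding b_def using \<open>int n dvd b0\<close> by simp
  moreover have "int n * Y \<le> b" "b \<le> 3 * int n * Y"
    using \<open>int n * Y \<le> b0 + K * (int n * Y)\<close> \<open>b0 + K * (int n * Y) \<le> 3 * (int n * Y)\<close>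
    unfolding b_def by (simp_all add: mult.assoc)
  moreover have "\<bar>real_of_int X - real_of_int Y * \<xi>\<bar> \<le> 2 * \<bar>real_of_int a - real_of_int b * \<xi>\<bar>"
    using far unfolding A_def a_def b_def .
  ultimately show thesis unfolding g_def by (rule that)
qed

lemma reduction_row_bounds:
  fixes X Y a b c d u g :: int and n :: nat and \<xi> B :: real
  assumes "Y > 0" "0 \<le> g" "g \<le> int n" "0 \<le> b" "b \<le> 3 * int n * Y"
    and det: "a * d - b * c = 1" and X: "u * a + g * c = X" and Y: "u * b + g * d = Y"
    and close: "\<bar>real_of_int X - real_of_int Y * \<xi>\<bar> \<le> B / real_of_int Y" and "B \<ge> 0"
  shows "\<bar>real_of_int a - real_of_int b * \<xi>\<bar> \<le> (real n + 3 * real n * B) / real_of_int Y"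
    and "\<bar>real_of_int a - real_of_int b * \<xi>\<bar> * real_of_int b \<le> 3 * real n * (real n + 3 * real n * B)"
proof -
  define A where "A = real_of_int a - real_of_int b * \<xi>"
  define E where "E = real_of_int X - real_of_int Y * \<xi>"
  have "Y * a - X * b = g * (a * d - b * c)" unfolding X[symmetric] Y[symmetric] by (simp add: algebra_simps)
  then have "real_of_int Y * real_of_int a - real_of_int X * real_of_int b = real_of_int g"
    using det by (metis mult.right_neutral of_int_diff of_int_mult)
  then have YA: "real_of_int Y * A = real_of_int g + real_of_int b * E"
    unfolding A_def E_def by (simp add: algebra_simps)
  have b_upper: "real_of_int b \<le> 3 * real n * real_of_int Y"
    using of_int_le_iff[where 'a = real, THEN iffD2, OF \<open>b \<le> 3 * int n * Y\<close>] by simp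
  have "real_of_int b * \<bar>E\<bar> \<le> (3 * real n * real_of_int Y) * (B / real_of_int Y)"
    using b_upper close \<open>0 \<le> b\<close> \<open>Y > 0\<close> unfolding E_def by (intro mult_mono) auto
  then have "real_of_int b * \<bar>E\<bar> \<le> 3 * real n * B" using \<open>Y > 0\<close> by simp
  moreover have "real_of_int Y * \<bar>A\<bar> \<le> real_of_int g + real_of_int b * \<bar>E\<bar>"
    using YA \<open>Y > 0\<close> \<open>0 \<le> g\<close> \<open>0 \<le> b\<close> abs_triangle_ineq[of "real_of_int g" "real_of_int b * E"]
    by (simp add: abs_mult)
  ultimately have "real_of_int Y * \<bar>A\<bar> \<le> real n + 3 * real n * B" using \<open>g \<le> int n\<close> by linarith
  then show A_le: "\<bar>A\<bar> \<le> (real n + 3 * real n * B) / real_of_int Y"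
    using \<open>Y > 0\<close> by (simp add: field_simps)
  have "\<bar>A\<bar> * real_of_int b \<le> ((real n + 3 * real n * B) / real_of_int Y) * (3 * real n * real_of_int Y)"
    using A_le b_upper \<open>0 \<le> b\<close> by (intro mult_mono) auto
  then show "\<bar>A\<bar> * real_of_int b \<le> 3 * real n * (real n + 3 * real n * B)"
    using \<open>Y > 0\<close> by (simp add: ac_simps)
qed

lemma reduction_column_bounds:
  fixes X Y a b c d u g :: int and n :: nat and \<xi> :: real
  assumes "Y > 0" "1 \<le> g" "g \<le> int n" "0 \<le> u" "u < g" "int n * Y \<le> b"
    and X: "u * a + g * c = X" and Y: "u * b + g * d = Y"
    and far: "\<bar>real_of_int X - real_of_int Y * \<xi>\<bar> \<le> 2 * \<bar>real_of_int a - real_of_int b * \<xi>\<bar>"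
  shows "\<bar>real_of_int c - real_of_int d * \<xi>\<bar> \<le> (real n + 2) * \<bar>real_of_int a - real_of_int b * \<xi>\<bar>"
    and "\<bar>real_of_int d\<bar> \<le> (real n + 1) * real_of_int b"
proof -
  define A where "A = real_of_int a - real_of_int b * \<xi>"
  define C where "C = real_of_int c - real_of_int d * \<xi>"
  define E where "E = real_of_int X - real_of_int Y * \<xi>"
  have b_lower: "real n * real_of_int Y \<le> real_of_int b"
    using of_int_le_iff[where 'a = real, THEN iffD2, OF \<open>int n * Y \<le> b\<close>] by simp
  have "real n \<ge> 1" using \<open>1 \<le> g\<close> \<open>g \<le> int n\<close> by simp
  then have Y_le: "real_of_int Y \<le> real n * real_of_int Y" using \<open>Y > 0\<close> by (simp add: mult_le_cancel_right1)
  with b_lower \<open>Y > 0\<close> have "real_of_int b \<ge> 0" by linarith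
  have "real_of_int u * A + real_of_int g * C = E"
    unfolding A_def C_def E_def X[symmetric] Y[symmetric] by (simp add: algebra_simps)
  then have "real_of_int g * \<bar>C\<bar> \<le> \<bar>E\<bar> + real_of_int u * \<bar>A\<bar>"
    using \<open>1 \<le> g\<close> \<open>0 \<le> u\<close> abs_triangle_ineq4[of E "real_of_int u * A"] by (simp add: abs_mult algebra_simps)
  also have "\<dots> \<le> 2 * \<bar>A\<bar> + real n * \<bar>A\<bar>"
    using far \<open>u < g\<close> \<open>g \<le> int n\<close> mult_right_mono[of "real_of_int u" "real n" "\<bar>A\<bar>"]
    unfolding A_def E_def by simp
  finally have "real_of_int g * \<bar>C\<bar> \<le> (real n + 2) * \<bar>A\<bar>" by (simp add: algebra_simps)
  moreover have "\<bar>C\<bar> \<le> real_of_int g * \<bar>C\<bar>" using \<open>1 \<le> g\<close> by (simp add: mult_le_cancel_right1)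
  ultimately show "\<bar>C\<bar> \<le> (real n + 2) * \<bar>A\<bar>" by linarith
  have "real_of_int g * \<bar>real_of_int d\<bar> = \<bar>real_of_int Y - real_of_int u * real_of_int b\<bar>"
    using \<open>1 \<le> g\<close> Y[symmetric] by (simp add: abs_mult)
  also have "\<dots> \<le> real_of_int Y + real_of_int u * real_of_int b"
    using \<open>0 \<le> u\<close> \<open>Y > 0\<close> \<open>real_of_int b \<ge> 0\<close> by (simp add: abs_le_iff)
  also have "\<dots> \<le> real_of_int b + real n * real_of_int b"
    using Y_le b_lower mult_right_mono[of "real_of_int u" "real n" "real_of_int b"]
      \<open>u < g\<close> \<open>g \<le> int n\<close> \<open>real_of_int b \<ge> 0\<close> by simp
  finally have "real_of_int g * \<bar>real_of_int d\<bar> \<le> (real n + 1) * real_of_int b" by (simp add: algebra_simps)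
  moreover have "\<bar>real_of_int d\<bar> \<le> real_of_int g * \<bar>real_of_int d\<bar>" using \<open>1 \<le> g\<close> by (simp add: mult_le_cancel_right1)
  ultimately show "\<bar>real_of_int d\<bar> \<le> (real n + 1) * real_of_int b" by linarith
qed

lemma gcd_unimodular_combination:
  fixes a b c d s t m :: int
  assumes det: "a * d - b * c = 1" and "m dvd b"
  shows "gcd (s * b + t * d) m = gcd t m"
proof -
  have "coprime d m"
  proof (rule coprimeI)
    fix z assume "z dvd d" "z dvd m"
    then have "z dvd a * d - b * c" using \<open>m dvd b\<close> dvd_trans[of z m b] by simp
    then show "is_unit z" using det by simp
  qed
  obtain q where "b = q * m" using \<open>m dvd b\<close> by (auto simp: dvd_def mult.commute)
  then have "gcd (s * b + t * d) m = gcd (t * d + (s * q) * m) m" by (simp add: algebra_simps)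
  also have "\<dots> = gcd (t * d) m" by (rule gcd_add_mult_left_int)
  also have "\<dots> = gcd t m" using \<open>coprime d m\<close> by (simp add: gcd_mult_left_right_cancel coprime_commute)
  finally show ?thesis .
qed

lemma unimodular_image_nonzero:
  fixes a b c d s t :: int
  assumes det: "a * d - b * c = 1" and "(s, t) \<noteq> (0, 0)"
  shows "(s * a + t * c, s * b + t * d) \<noteq> (0, 0)"
proof
  assume image: "(s * a + t * c, s * b + t * d) = (0, 0)"
  have "d * (s * a + t * c) - c * (s * b + t * d) = s * (a * d - b * c)"
    and "a * (s * b + t * d) - b * (s * a + t * c) = t * (a * d - b * c)"
    by (simp_all add: algebra_simps)
  with image det \<open>(s, t) \<noteq> (0, 0)\<close> show False by simp
qed

text \<open>\<open>\<eta>\<close> and \<open>\<eta>'\<close> are the images of \<open>\<xi>\<close> and \<open>\<infinity>\<close> under the M\<ouml>bius map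
  \<open>z \<mapsto> (d z - c) / (a - b z)\<close>.\<close>
lemma mu_quot_unimodular:
  fixes a b c d s t :: int and \<xi> :: real
  assumes det: "a * d - b * c = 1" and "int n dvd b" "b \<noteq> 0"
    and A: "real_of_int a - real_of_int b * \<xi> \<noteq> 0"
  defines "\<eta> \<equiv> - (real_of_int c - real_of_int d * \<xi>) / (real_of_int a - real_of_int b * \<xi>)"
    and "\<eta>' \<equiv> - real_of_int d / real_of_int b"
  shows "\<bar>\<eta> - \<eta>'\<bar> = 1 / (\<bar>real_of_int a - real_of_int b * \<xi>\<bar> * \<bar>real_of_int b\<bar>)"
    and "mu_quot n \<eta> \<eta>' s t = lam_quot n \<xi> (s * a + t * c) (s * b + t * d)"
proof -
  define A where "A = real_of_int a - real_of_int b * \<xi>"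
  define C where "C = real_of_int c - real_of_int d * \<xi>"
  define P where "P = real_of_int (s * a + t * c) - real_of_int (s * b + t * d) * \<xi>"
  define Q where "Q = real_of_int (s * b + t * d)"
  have "A \<noteq> 0" "real_of_int b \<noteq> 0" using A \<open>b \<noteq> 0\<close> unfolding A_def by simp_all
  have "A * real_of_int d - real_of_int b * C = real_of_int (a * d - b * c)"
    unfolding A_def C_def by (simp add: algebra_simps)
  then have "A * real_of_int d - real_of_int b * C = 1" using det by simp
  then have dist: "\<eta> - \<eta>' = 1 / (A * real_of_int b)"
    unfolding \<eta>_def \<eta>'_def A_def[symmetric] C_def[symmetric] using \<open>A \<noteq> 0\<close> \<open>real_of_int b \<noteq> 0\<close>
    by (simp add: field_simps)
  then show "\<bar>\<eta> - \<eta>'\<bar> = 1 / (\<bar>real_of_int a - real_of_int b * \<xi>\<bar> * \<bar>real_of_int b\<bar>)"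
    unfolding A_def by (simp add: abs_mult)
  have \<eta>_image: "real_of_int s - real_of_int t * \<eta> = P / A"
    unfolding \<eta>_def P_def A_def[symmetric] C_def[symmetric] using \<open>A \<noteq> 0\<close>
    by (simp add: field_simps A_def C_def)
  have \<eta>'_image: "real_of_int s - real_of_int t * \<eta>' = Q / real_of_int b"
    unfolding \<eta>'_def Q_def using \<open>real_of_int b \<noteq> 0\<close> by (simp add: field_simps)
  have "mu_quot n \<eta> \<eta>' s t = real_of_int (gcd t (int n)) / (\<bar>Q\<bar> * \<bar>P\<bar>)"
    unfolding mu_quot_def dist \<eta>_image \<eta>'_image using \<open>A \<noteq> 0\<close> \<open>real_of_int b \<noteq> 0\<close>
    by (cases "P = 0"; cases "Q = 0") (simp_all add: abs_mult abs_divide field_simps)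
  also have "\<dots> = lam_quot n \<xi> (s * a + t * c) (s * b + t * d)"
    unfolding lam_quot_def gcd_unimodular_combination[OF det \<open>int n dvd b\<close>] P_def Q_def ..
  finally show "mu_quot n \<eta> \<eta>' s t = lam_quot n \<xi> (s * a + t * c) (s * b + t * d)" .
qed

lemma abs_lincomb_le:
  fixes s t A C K :: real
  assumes "\<bar>C\<bar> \<le> K * \<bar>A\<bar>"
  shows "\<bar>s * A + t * C\<bar> \<le> (\<bar>s\<bar> + \<bar>t\<bar> * K) * \<bar>A\<bar>"
proof -
  have "\<bar>s * A + t * C\<bar> \<le> \<bar>s\<bar> * \<bar>A\<bar> + \<bar>t\<bar> * \<bar>C\<bar>"
    using abs_triangle_ineq[of "s * A" "t * C"] by (simp add: abs_mult)
  also have "\<dots> \<le> \<bar>s\<bar> * \<bar>A\<bar> + \<bar>t\<bar> * (K * \<bar>A\<bar>)" using assms by (intro add_left_mono mult_left_mono) simp_all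
  finally show ?thesis by (simp add: algebra_simps)
qed

lemma mu_quot_unimodular_images:
  fixes a b c d s t :: int and \<xi> K :: real
  assumes det: "a * d - b * c = 1" and "int n dvd b" "b \<noteq> 0"
    and A: "real_of_int a - real_of_int b * \<xi> \<noteq> 0" and "(s, t) \<noteq> (0, 0)"
    and C_le: "\<bar>real_of_int c - real_of_int d * \<xi>\<bar> \<le> K * \<bar>real_of_int a - real_of_int b * \<xi>\<bar>"
  shows "\<exists>P Q. (P, Q) \<noteq> (0, 0) \<and>
    mu_quot n (- (real_of_int c - real_of_int d * \<xi>) / (real_of_int a - real_of_int b * \<xi>))
      (- real_of_int d / real_of_int b) s t = lam_quot n \<xi> P Q \<and>
    \<bar>real_of_int P - real_of_int Q * \<xi>\<bar> \<le>
      (\<bar>real_of_int s\<bar> + \<bar>real_of_int t\<bar> * K) * \<bar>real_of_int a - real_of_int b * \<xi>\<bar>"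
proof (intro exI conjI)
  show "(s * a + t * c, s * b + t * d) \<noteq> (0, 0)" using unimodular_image_nonzero[OF det \<open>(s, t) \<noteq> (0, 0)\<close>] .
  show "mu_quot n (- (real_of_int c - real_of_int d * \<xi>) / (real_of_int a - real_of_int b * \<xi>))
      (- real_of_int d / real_of_int b) s t = lam_quot n \<xi> (s * a + t * c) (s * b + t * d)"
    by (rule mu_quot_unimodular(2)[OF det \<open>int n dvd b\<close> \<open>b \<noteq> 0\<close> A])
  have "real_of_int (s * a + t * c) - real_of_int (s * b + t * d) * \<xi> =
      real_of_int s * (real_of_int a - real_of_int b * \<xi>) + real_of_int t * (real_of_int c - real_of_int d * \<xi>)"
    by (simp add: algebra_simps)
  with C_le show "\<bar>real_of_int (s * a + t * c) - real_of_int (s * b + t * d) * \<xi>\<bar> \<le>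
      (\<bar>real_of_int s\<bar> + \<bar>real_of_int t\<bar> * K) * \<bar>real_of_int a - real_of_int b * \<xi>\<bar>"
    using abs_lincomb_le by metis
qed

definition mu_model :: "nat \<Rightarrow> real \<Rightarrow> real \<Rightarrow> int \<Rightarrow> int \<Rightarrow> int \<Rightarrow> real \<Rightarrow> real \<Rightarrow> bool" where
  "mu_model n \<xi> K X Y u \<eta> \<eta>' \<longleftrightarrow>
     0 \<le> u \<and> u < gcd Y (int n) \<and> \<bar>\<eta>\<bar> \<le> K \<and> \<bar>\<eta>'\<bar> \<le> K \<and> 1 / K \<le> \<bar>\<eta> - \<eta>'\<bar> \<and>
     mu_quot n \<eta> \<eta>' u (gcd Y (int n)) = lam_quot n \<xi> X Y \<and>
     (\<forall>s t. (s, t) \<noteq> (0, 0) \<longrightarrow>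
        (\<exists>P Q. (P, Q) \<noteq> (0, 0) \<and> mu_quot n \<eta> \<eta>' s t = lam_quot n \<xi> P Q \<and>
           \<bar>real_of_int P - real_of_int Q * \<xi>\<bar> \<le>
             (\<bar>real_of_int s\<bar> + \<bar>real_of_int t\<bar> * K) * K / real_of_int Y))"

lemma mu_model_of_reduction_matrix:
  fixes X Y a b c d u :: int and \<xi> K :: real
  assumes irr: "\<xi> \<notin> \<rat>" and "0 \<le> u" "u < gcd Y (int n)" and det: "a * d - b * c = 1"
    and X: "u * a + gcd Y (int n) * c = X" and Y: "u * b + gcd Y (int n) * d = Y"
    and "int n dvd b" "b > 0" "Y > 0"
    and A_le: "\<bar>real_of_int a - real_of_int b * \<xi>\<bar> \<le> K / real_of_int Y"
    and Ab_le: "\<bar>real_of_int a - real_of_int b * \<xi>\<bar> * real_of_int b \<le> K"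
    and C_le: "\<bar>real_of_int c - real_of_int d * \<xi>\<bar> \<le> K * \<bar>real_of_int a - real_of_int b * \<xi>\<bar>"
    and d_le: "\<bar>real_of_int d\<bar> \<le> K * real_of_int b"
  shows "mu_model n \<xi> K X Y u
    (- (real_of_int c - real_of_int d * \<xi>) / (real_of_int a - real_of_int b * \<xi>)) (- real_of_int d / real_of_int b)"
proof -
  define A where "A = real_of_int a - real_of_int b * \<xi>"
  define C where "C = real_of_int c - real_of_int d * \<xi>"
  have "A \<noteq> 0" unfolding A_def using irrational_linear_form_nonzero[OF irr] \<open>b > 0\<close> by simp
  have "b \<noteq> 0" using \<open>b > 0\<close> by simp
  note unimodular = mu_quot_unimodular[OF det \<open>int n dvd b\<close> \<open>b \<noteq> 0\<close> \<open>A \<noteq> 0\<close>[unfolded A_def]]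
  have "0 < \<bar>A\<bar> * real_of_int b" using \<open>A \<noteq> 0\<close> \<open>b > 0\<close> by simp
  with Ab_le have "K > 0" unfolding A_def by linarith
  have "1 / K \<le> 1 / (\<bar>A\<bar> * real_of_int b)"
    using \<open>0 < \<bar>A\<bar> * real_of_int b\<close> Ab_le unfolding A_def by (intro frac_le) simp_all
  moreover have "\<bar>- C / A\<bar> \<le> K" using C_le \<open>A \<noteq> 0\<close> unfolding A_def C_def
    by (simp add: abs_divide pos_divide_le_eq)
  moreover have "\<bar>- real_of_int d / real_of_int b\<bar> \<le> K"
    using d_le \<open>b > 0\<close> by (simp add: abs_divide pos_divide_le_eq)
  moreover have "mu_quot n (- C / A) (- real_of_int d / real_of_int b) u (gcd Y (int n)) = lam_quot n \<xi> X Y"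
    using unimodular(2)[of u "gcd Y (int n)"] X Y unfolding A_def C_def by simp
  moreover have "(\<bar>real_of_int s\<bar> + \<bar>real_of_int t\<bar> * K) * \<bar>A\<bar> \<le>
      (\<bar>real_of_int s\<bar> + \<bar>real_of_int t\<bar> * K) * K / real_of_int Y" for s t
    using mult_left_mono[OF A_le, of "\<bar>real_of_int s\<bar> + \<bar>real_of_int t\<bar> * K"] \<open>K > 0\<close>
    unfolding A_def by simp
  then have "\<exists>P Q. (P, Q) \<noteq> (0, 0) \<and> mu_quot n (- C / A) (- real_of_int d / real_of_int b) s t = lam_quot n \<xi> P Q \<and>
      \<bar>real_of_int P - real_of_int Q * \<xi>\<bar> \<le> (\<bar>real_of_int s\<bar> + \<bar>real_of_int t\<bar> * K) * K / real_of_int Y"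
    if "(s, t) \<noteq> (0, 0)" for s t
    using mu_quot_unimodular_images[OF det \<open>int n dvd b\<close> \<open>b \<noteq> 0\<close> \<open>A \<noteq> 0\<close>[unfolded A_def] that C_le]
    unfolding A_def C_def by (meson order_trans)
  ultimately show ?thesis
    using \<open>0 \<le> u\<close> \<open>u < gcd Y (int n)\<close> unimodular(1) \<open>b > 0\<close>
    unfolding mu_model_def A_def C_def by simp
qed

lemma exists_mu_model:
  assumes n: "n > 0" and irr: "\<xi> \<notin> \<rat>" and "B \<ge> 0"
  obtains K where "K > 0" and "\<And>X Y. coprime X Y \<Longrightarrow> Y > 0 \<Longrightarrow>
      \<bar>real_of_int X - real_of_int Y * \<xi>\<bar> \<le> B / real_of_int Y \<Longrightarrow>
      \<exists>u \<eta> \<eta>'. mu_model n \<xi> K X Y u \<eta> \<eta>'"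
proof -
  define K where "K = 3 * real n * (real n + 3 * real n * B) + real n + 2"
  have "1 \<le> 3 * real n" using n by simp
  moreover have "0 \<le> real n + 3 * real n * B" using \<open>B \<ge> 0\<close> by simp
  ultimately have "1 * (real n + 3 * real n * B) \<le> 3 * real n * (real n + 3 * real n * B)"
    by (rule mult_right_mono)
  then have K_ge: "real n + 3 * real n * B \<le> K" "3 * real n * (real n + 3 * real n * B) \<le> K"
    "real n + 2 \<le> K" "real n + 1 \<le> K"
    using \<open>0 \<le> real n + 3 * real n * B\<close> by (simp_all add: K_def)
  have "K > 0" using K_ge(3) by simp
  show thesis
  proof (rule that[OF \<open>K > 0\<close>])
    fix X Y :: int
    assume "coprime X Y" "Y > 0" and close: "\<bar>real_of_int X - real_of_int Y * \<xi>\<bar> \<le> B / real_of_int Y"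
    obtain u a b c d where "0 \<le> u" "u < gcd Y (int n)" and det: "a * d - b * c = 1"
      and X: "u * a + gcd Y (int n) * c = X" and Y: "u * b + gcd Y (int n) * d = Y" and "int n dvd b"
      and "int n * Y \<le> b" "b \<le> 3 * int n * Y"
      and far: "\<bar>real_of_int X - real_of_int Y * \<xi>\<bar> \<le> 2 * \<bar>real_of_int a - real_of_int b * \<xi>\<bar>"
      by (rule exists_reduction_matrix[OF n \<open>Y > 0\<close> \<open>coprime X Y\<close>])
    define A where "A = real_of_int a - real_of_int b * \<xi>"
    have "1 \<le> gcd Y (int n)" "gcd Y (int n) \<le> int n" using n by (simp_all add: int_one_le_iff_zero_less)
    moreover have "b > 0" using \<open>int n * Y \<le> b\<close> n \<open>Y > 0\<close> mult_pos_pos[of "int n" Y] by linarith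
    ultimately have row: "\<bar>A\<bar> \<le> (real n + 3 * real n * B) / real_of_int Y"
      "\<bar>A\<bar> * real_of_int b \<le> 3 * real n * (real n + 3 * real n * B)"
      and column: "\<bar>real_of_int c - real_of_int d * \<xi>\<bar> \<le> (real n + 2) * \<bar>A\<bar>"
      "\<bar>real_of_int d\<bar> \<le> (real n + 1) * real_of_int b"
      using reduction_row_bounds[of Y "gcd Y (int n)" n b a d c u X \<xi> B]
        reduction_column_bounds[of Y "gcd Y (int n)" n u b a c X d \<xi>]
        \<open>Y > 0\<close> \<open>0 \<le> u\<close> \<open>u < gcd Y (int n)\<close> det X Y \<open>int n * Y \<le> b\<close> \<open>b \<le> 3 * int n * Y\<close>
        close \<open>B \<ge> 0\<close> far
      unfolding A_def by simp_all
    have "(real n + 3 * real n * B) / real_of_int Y \<le> K / real_of_int Y"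
      using K_ge(1) \<open>Y > 0\<close> by (simp add: divide_right_mono)
    moreover have "(real n + 2) * \<bar>A\<bar> \<le> K * \<bar>A\<bar>" "(real n + 1) * real_of_int b \<le> K * real_of_int b"
      using K_ge(3,4) \<open>b > 0\<close> by (simp_all add: mult_right_mono)
    ultimately show "\<exists>u \<eta> \<eta>'. mu_model n \<xi> K X Y u \<eta> \<eta>'"
      using mu_model_of_reduction_matrix[OF irr \<open>0 \<le> u\<close> \<open>u < gcd Y (int n)\<close> det X Y \<open>int n dvd b\<close>
          \<open>b > 0\<close> \<open>Y > 0\<close>] row column K_ge(2)
      unfolding A_def by (meson order_trans)
  qed
qed

lemma int_seq_tendsto_imp_eventually_const:
  fixes z :: "nat \<Rightarrow> int"
  assumes "(\<lambda>k. real_of_int (z k)) \<longlonglongrightarrow> l"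
  obtains N where "\<And>k. k \<ge> N \<Longrightarrow> z k = z N"
proof -
  have "eventually (\<lambda>k. dist (real_of_int (z k)) l < 1 / 2) sequentially"
    using assms by (rule tendstoD) simp
  then obtain N where N: "\<And>k. k \<ge> N \<Longrightarrow> \<bar>real_of_int (z k) - l\<bar> < 1 / 2"
    by (auto simp: eventually_sequentially dist_real_def)
  have "z k = z N" if "k \<ge> N" for k
  proof -
    have "\<bar>real_of_int (z k) - real_of_int (z N)\<bar> < 1" using N[OF that] N[of N] by linarith
    then show ?thesis by linarith
  qed
  then show thesis by (rule that)
qed

lemma bounded_sequences_subseq:
  fixes u g :: "nat \<Rightarrow> int" and x y :: "nat \<Rightarrow> real"
  assumes "\<And>k. \<bar>real_of_int (u k)\<bar> \<le> M" "\<And>k. \<bar>real_of_int (g k)\<bar> \<le> M"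
    and "\<And>k. \<bar>x k\<bar> \<le> M" "\<And>k. \<bar>y k\<bar> \<le> M"
  obtains r u0 g0 x0 y0 where "strict_mono r" "\<And>k. u (r k) = u0" "\<And>k. g (r k) = g0"
    and "(\<lambda>k. x (r k)) \<longlonglongrightarrow> x0" "(\<lambda>k. y (r k)) \<longlonglongrightarrow> y0"
proof -
  define F where "F k = (real_of_int (u k), real_of_int (g k), x k, y k)" for k
  have "range F \<subseteq> {-M..M} \<times> {-M..M} \<times> {-M..M} \<times> {-M..M}"
    using assms by (auto simp: F_def abs_le_iff minus_le_iff)
  then have "bounded (range F)"
    by (rule bounded_subset[rotated]) (intro bounded_Times bounded_closed_interval)
  then obtain l r where "strict_mono r" and lim: "(F \<circ> r) \<longlonglongrightarrow> l"
    using bounded_imp_convergent_subsequence by blast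
  have lim_u: "(\<lambda>k. real_of_int (u (r k))) \<longlonglongrightarrow> fst l"
    using tendsto_fst[OF lim] by (simp add: o_def F_def)
  have lim_g: "(\<lambda>k. real_of_int (g (r k))) \<longlonglongrightarrow> fst (snd l)"
    using tendsto_fst[OF tendsto_snd[OF lim]] by (simp add: o_def F_def)
  have lim_x: "(\<lambda>k. x (r k)) \<longlonglongrightarrow> fst (snd (snd l))"
    using tendsto_fst[OF tendsto_snd[OF tendsto_snd[OF lim]]] by (simp add: o_def F_def)
  have lim_y: "(\<lambda>k. y (r k)) \<longlonglongrightarrow> snd (snd (snd l))"
    using tendsto_snd[OF tendsto_snd[OF tendsto_snd[OF lim]]] by (simp add: o_def F_def)
  obtain N1 where N1: "\<And>k. k \<ge> N1 \<Longrightarrow> u (r k) = u (r N1)"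
    using int_seq_tendsto_imp_eventually_const[OF lim_u] by blast
  obtain N2 where N2: "\<And>k. k \<ge> N2 \<Longrightarrow> g (r k) = g (r N2)"
    using int_seq_tendsto_imp_eventually_const[OF lim_g] by blast
  define N where "N = max N1 N2"
  show thesis
  proof (rule that[of "\<lambda>k. r (k + N)"])
    show "strict_mono (\<lambda>k. r (k + N))"
      using \<open>strict_mono r\<close> by (simp add: strict_mono_def)
    show "u (r (k + N)) = u (r N1)" "g (r (k + N)) = g (r N2)" for k
      using N1[of "k + N"] N2[of "k + N"] unfolding N_def by simp_all
    show "(\<lambda>k. x (r (k + N))) \<longlonglongrightarrow> fst (snd (snd l))" "(\<lambda>k. y (r (k + N))) \<longlonglongrightarrow> snd (snd (snd l))"
      using LIMSEQ_ignore_initial_segment[OF lim_x] LIMSEQ_ignore_initial_segment[OF lim_y] by simp_all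
  qed
qed

lemma mu_quot_tendsto:
  assumes "n > 0" "\<eta> \<longlonglongrightarrow> e" "\<eta>' \<longlonglongrightarrow> e'" "e \<noteq> e'"
    and bounded: "eventually (\<lambda>k. 0 < mu_quot n (\<eta> k) (\<eta>' k) s t \<and> mu_quot n (\<eta> k) (\<eta>' k) s t < \<beta>) sequentially"
  shows "\<bar>real_of_int s - real_of_int t * e\<bar> * \<bar>real_of_int s - real_of_int t * e'\<bar> \<noteq> 0"
    and "(\<lambda>k. mu_quot n (\<eta> k) (\<eta>' k) s t) \<longlonglongrightarrow> mu_quot n e e' s t"
proof -
  define num where "num x x' = real_of_int (gcd t (int n)) * \<bar>x - x'\<bar>" for x x'
  define den where "den x x' = \<bar>real_of_int s - real_of_int t * x\<bar> * \<bar>real_of_int s - real_of_int t * x'\<bar>"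
    for x x'
  have quot: "mu_quot n x x' s t = num x x' / den x x'" for x x' unfolding mu_quot_def num_def den_def ..
  have lim_num: "(\<lambda>k. num (\<eta> k) (\<eta>' k)) \<longlonglongrightarrow> num e e'" unfolding num_def by (intro tendsto_intros assms)
  have lim_den: "(\<lambda>k. den (\<eta> k) (\<eta>' k)) \<longlonglongrightarrow> den e e'" unfolding den_def by (intro tendsto_intros assms)
  have "eventually (\<lambda>k. num (\<eta> k) (\<eta>' k) \<le> \<beta> * den (\<eta> k) (\<eta>' k)) sequentially"
    using bounded
  proof (rule eventually_mono)
    fix k assume "0 < mu_quot n (\<eta> k) (\<eta>' k) s t \<and> mu_quot n (\<eta> k) (\<eta>' k) s t < \<beta>"
    moreover have "den (\<eta> k) (\<eta>' k) \<ge> 0" unfolding den_def by simp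
    ultimately have "den (\<eta> k) (\<eta>' k) > 0" "num (\<eta> k) (\<eta>' k) / den (\<eta> k) (\<eta>' k) < \<beta>"
      unfolding quot by (auto simp: less_le)
    then show "num (\<eta> k) (\<eta>' k) \<le> \<beta> * den (\<eta> k) (\<eta>' k)" by (simp add: divide_less_eq)
  qed
  then have "num e e' \<le> \<beta> * den e e'"
    using tendsto_le[OF trivial_limit_sequentially tendsto_mult_left[OF lim_den] lim_num] by blast
  moreover have "num e e' > 0" unfolding num_def using \<open>n > 0\<close> \<open>e \<noteq> e'\<close> by simp
  ultimately have "den e e' \<noteq> 0" by auto
  then show "\<bar>real_of_int s - real_of_int t * e\<bar> * \<bar>real_of_int s - real_of_int t * e'\<bar> \<noteq> 0"
    unfolding den_def .
  show "(\<lambda>k. mu_quot n (\<eta> k) (\<eta>' k) s t) \<longlonglongrightarrow> mu_quot n e e' s t"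
    unfolding quot using lim_num lim_den \<open>den e e' \<noteq> 0\<close> by (rule tendsto_divide)
qed

lemma mu_n_attained_at_limit:
  assumes "n > 0" "\<eta> \<longlonglongrightarrow> e" "\<eta>' \<longlonglongrightarrow> e'" "e \<noteq> e'" "(s0, t0) \<noteq> (0, 0)"
    and lim0: "(\<lambda>k. mu_quot n (\<eta> k) (\<eta>' k) s0 t0) \<longlonglongrightarrow> \<alpha>"
    and below: "\<And>s t \<delta>. (s, t) \<noteq> (0, 0) \<Longrightarrow> \<delta> > 0 \<Longrightarrow>
       eventually (\<lambda>k. 0 < mu_quot n (\<eta> k) (\<eta>' k) s t \<and> mu_quot n (\<eta> k) (\<eta>' k) s t < \<alpha> + \<delta>) sequentially"
  shows "mu_n n e e' = ereal \<alpha>" and "mu_term n e e' s0 t0 = ereal \<alpha>"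
proof -
  have mu_term_eq: "mu_term n e e' s t = ereal (mu_quot n e e' s t)"
    and lim: "(\<lambda>k. mu_quot n (\<eta> k) (\<eta>' k) s t) \<longlonglongrightarrow> mu_quot n e e' s t"
    if "(s, t) \<noteq> (0, 0)" for s t
    using mu_quot_tendsto[OF assms(1-4) below[OF that zero_less_one]] mu_term_eq_mu_quot by blast+
  have le: "mu_quot n e e' s t \<le> \<alpha>" if "(s, t) \<noteq> (0, 0)" for s t
  proof (rule field_le_epsilon)
    fix \<delta> :: real assume "\<delta> > 0"
    have "eventually (\<lambda>k. mu_quot n (\<eta> k) (\<eta>' k) s t \<le> \<alpha> + \<delta>) sequentially"
      using below[OF that \<open>\<delta> > 0\<close>] by (rule eventually_mono) simp
    with lim[OF that] show "mu_quot n e e' s t \<le> \<alpha> + \<delta>"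
      by (rule tendsto_upperbound[OF _ _ trivial_limit_sequentially])
  qed
  have "mu_quot n e e' s0 t0 = \<alpha>" using LIMSEQ_unique[OF lim[OF assms(5)] lim0] .
  then show at0: "mu_term n e e' s0 t0 = ereal \<alpha>" using mu_term_eq[OF assms(5)] by simp
  show "mu_n n e e' = ereal \<alpha>"
  proof (rule antisym)
    show "mu_n n e e' \<le> ereal \<alpha>" unfolding mu_n_def
      by (rule SUP_least) (auto simp: mu_term_eq le)
    show "ereal \<alpha> \<le> mu_n n e e'" unfolding mu_n_def at0[symmetric]
      using SUP_upper[of "(s0, t0)" "{p. p \<noteq> (0, 0)}" "\<lambda>p. mu_term n e e' (fst p) (snd p)"] assms(5)
      by simp
  qed
qed

lemma mu_model_bounded:
  assumes "mu_model n \<xi> K X Y u \<eta> \<eta>'" "n > 0"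
  shows "\<bar>real_of_int u\<bar> \<le> real n + K" "\<bar>real_of_int (gcd Y (int n))\<bar> \<le> real n + K"
    and "\<bar>\<eta>\<bar> \<le> real n + K" "\<bar>\<eta>'\<bar> \<le> real n + K"
proof -
  have "gcd Y (int n) \<le> int n" using \<open>n > 0\<close> by simp
  with assms(1) have "0 \<le> u" "u \<le> int n" "gcd Y (int n) \<le> int n" "\<bar>\<eta>\<bar> \<le> K" "\<bar>\<eta>'\<bar> \<le> K"
    unfolding mu_model_def by auto
  moreover from this(2,3) have "real_of_int u \<le> real n" "real_of_int (gcd Y (int n)) \<le> real n"
    using of_int_le_iff[where 'a = real, THEN iffD2] by fastforce+
  ultimately show "\<bar>real_of_int u\<bar> \<le> real n + K" "\<bar>real_of_int (gcd Y (int n))\<bar> \<le> real n + K"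
    "\<bar>\<eta>\<bar> \<le> real n + K" "\<bar>\<eta>'\<bar> \<le> real n + K"
    by auto
qed

lemma eventually_mu_quot_below_of_models:
  assumes n: "n > 0" and irr: "\<xi> \<notin> \<rat>" and la: "lambda_n n \<xi> = ereal \<alpha>"
    and models: "\<And>k. mu_model n \<xi> K (X k) (Y k) (u k) (\<eta> k) (\<eta>' k)"
    and Y_top: "filterlim (\<lambda>k. real_of_int (Y k)) at_top sequentially"
    and "(s, t) \<noteq> (0, 0)" "\<delta> > 0"
  shows "eventually (\<lambda>k. 0 < mu_quot n (\<eta> k) (\<eta>' k) s t \<and> mu_quot n (\<eta> k) (\<eta>' k) s t < \<alpha> + \<delta>)
           sequentially"
proof (rule eventually_lam_quot_below[OF n irr la \<open>\<delta> > 0\<close>])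
  show "\<exists>P Q. (P, Q) \<noteq> (0, 0) \<and> mu_quot n (\<eta> k) (\<eta>' k) s t = lam_quot n \<xi> P Q \<and>
      \<bar>real_of_int P - real_of_int Q * \<xi>\<bar> \<le> (\<bar>real_of_int s\<bar> + \<bar>real_of_int t\<bar> * K) * K / real_of_int (Y k)"
    for k using models[of k] \<open>(s, t) \<noteq> (0, 0)\<close> unfolding mu_model_def by blast
  show "(\<lambda>k. (\<bar>real_of_int s\<bar> + \<bar>real_of_int t\<bar> * K) * K / real_of_int (Y k)) \<longlonglongrightarrow> 0"
    by (rule tendsto_divide_0[OF tendsto_const filterlim_at_top_imp_at_infinity[OF Y_top]])
qed

lemma exists_model_sequence:
  assumes n: "n > 0" and irr: "\<xi> \<notin> \<rat>" and la: "lambda_n n \<xi> = ereal \<alpha>"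
  obtains K X Y u \<eta> \<eta>' where "K > 0" "\<And>k. mu_model n \<xi> K (X k) (Y k) (u k) (\<eta> k) (\<eta>' k)"
    and "filterlim (\<lambda>k. real_of_int (Y k)) at_top sequentially"
    and "(\<lambda>k. lam_quot n \<xi> (X k) (Y k)) \<longlonglongrightarrow> \<alpha>"
proof -
  obtain X Y where cop: "\<And>k. coprime (X k) (Y k)" and Y_pos: "\<And>k. Y k > 0"
    and Y_top: "filterlim (\<lambda>k. real_of_int (Y k)) at_top sequentially"
    and close: "\<And>k. \<bar>real_of_int (X k) - real_of_int (Y k) * \<xi>\<bar> \<le> 2 * real n / real_of_int (Y k)"
    and lim: "(\<lambda>k. lam_quot n \<xi> (X k) (Y k)) \<longlonglongrightarrow> \<alpha>"
    using exists_approximation_sequence[OF n irr la] by blast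
  have "2 * real n \<ge> 0" by simp
  then obtain K where "K > 0" and model: "\<And>X Y. coprime X Y \<Longrightarrow> Y > 0 \<Longrightarrow>
      \<bar>real_of_int X - real_of_int Y * \<xi>\<bar> \<le> 2 * real n / real_of_int Y \<Longrightarrow>
      \<exists>u \<eta> \<eta>'. mu_model n \<xi> K X Y u \<eta> \<eta>'"
    using exists_mu_model[OF n irr] by blast
  have "\<forall>k. \<exists>u \<eta> \<eta>'. mu_model n \<xi> K (X k) (Y k) u \<eta> \<eta>'" using model[OF cop Y_pos close] by blast
  then obtain u \<eta> \<eta>' where "\<And>k. mu_model n \<xi> K (X k) (Y k) (u k) (\<eta> k) (\<eta>' k)" by metis
  from \<open>K > 0\<close> this Y_top lim show thesis by (rule that)
qed

lemma lambda_n_realized_by_mu_n: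
  assumes n: "n > 0" and irr: "\<xi> \<notin> \<rat>" and la: "lambda_n n \<xi> = ereal \<alpha>"
  shows "\<exists>e e'. e \<noteq> e' \<and> mu_n n e e' = ereal \<alpha> \<and>
           (\<exists>s t. (s, t) \<noteq> (0, 0) \<and> mu_term n e e' s t = mu_n n e e')"
proof -
  obtain K X Y u \<eta> \<eta>' where "K > 0" and models: "\<And>k. mu_model n \<xi> K (X k) (Y k) (u k) (\<eta> k) (\<eta>' k)"
    and Y_top: "filterlim (\<lambda>k. real_of_int (Y k)) at_top sequentially"
    and lim: "(\<lambda>k. lam_quot n \<xi> (X k) (Y k)) \<longlonglongrightarrow> \<alpha>"
    using exists_model_sequence[OF n irr la] by blast
  define g where "g k = gcd (Y k) (int n)" for k
  obtain r u0 g0 e e' where "strict_mono r" and u0: "\<And>k. u (r k) = u0" and g0: "\<And>k. g (r k) = g0"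
    and lim_e: "(\<lambda>k. \<eta> (r k)) \<longlonglongrightarrow> e" and lim_e': "(\<lambda>k. \<eta>' (r k)) \<longlonglongrightarrow> e'"
    using bounded_sequences_subseq[of u "real n + K" g \<eta> \<eta>'] mu_model_bounded[OF models n]
    unfolding g_def by blast
  have "1 / K \<le> \<bar>e - e'\<bar>"
  proof (rule tendsto_lowerbound[OF tendsto_rabs[OF tendsto_diff[OF lim_e lim_e']] _ trivial_limit_sequentially])
    show "eventually (\<lambda>k. 1 / K \<le> \<bar>\<eta> (r k) - \<eta>' (r k)\<bar>) sequentially"
      using models unfolding mu_model_def by simp
  qed
  with \<open>K > 0\<close> have "e \<noteq> e'" by auto
  have "(u0, g0) \<noteq> (0, 0)" using g0[of 0] n unfolding g_def by auto
  have "mu_quot n (\<eta> (r k)) (\<eta>' (r k)) u0 g0 = lam_quot n \<xi> (X (r k)) (Y (r k))" for k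
    using models[of "r k"] u0[of k] g0[of k] unfolding mu_model_def g_def by simp
  with LIMSEQ_subseq_LIMSEQ[OF lim \<open>strict_mono r\<close>]
  have lim0: "(\<lambda>k. mu_quot n (\<eta> (r k)) (\<eta>' (r k)) u0 g0) \<longlonglongrightarrow> \<alpha>" by (simp add: o_def)
  have "filterlim (\<lambda>k. real_of_int (Y (r k))) at_top sequentially"
    using filterlim_compose[OF Y_top filterlim_subseq[OF \<open>strict_mono r\<close>]] .
  note below = eventually_mu_quot_below_of_models[OF n irr la models this]
  from mu_n_attained_at_limit[OF n lim_e lim_e' \<open>e \<noteq> e'\<close> \<open>(u0, g0) \<noteq> (0, 0)\<close> lim0 below]
  show ?thesis using \<open>e \<noteq> e'\<close> \<open>(u0, g0) \<noteq> (0, 0)\<close> by (intro exI[of _ e] exI[of _ e']) auto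
qed

theorem proposition3p4:
  fixes n :: nat
  assumes "n > 0"
  shows "L_n n \<subseteq> M_n n \<and>
    (\<forall>\<alpha>\<in>L_n n. \<exists>\<xi> \<xi>'. \<xi> \<noteq> \<xi>' \<and> mu_n n \<xi> \<xi>' = ereal \<alpha> \<and>
        (\<exists>s t. (s, t) \<noteq> (0, 0) \<and> mu_term n \<xi> \<xi>' s t = mu_n n \<xi> \<xi>'))"
proof -
  have realized: "\<forall>\<alpha>\<in>L_n n. \<exists>\<xi> \<xi>'. \<xi> \<noteq> \<xi>' \<and> mu_n n \<xi> \<xi>' = ereal \<alpha> \<and>
      (\<exists>s t. (s, t) \<noteq> (0, 0) \<and> mu_term n \<xi> \<xi>' s t = mu_n n \<xi> \<xi>')"
    using lambda_n_realized_by_mu_n[OF \<open>n > 0\<close>] unfolding L_n_def by blast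
  then have "L_n n \<subseteq> M_n n" unfolding M_n_def by blast
  with realized show ?thesis by blast
qed

end
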